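(* Under the setting and hypotheses (H1)–(H5) in the context, let $\psi_0$ be a locally uniform limit on $[0,T]\times\mathbb{R}$ of a subsequence $\psi_{\varepsilon_n}$ with $\varepsilon_n\to0$. Then $\psi_0$ is a viscosity subsolution of \[ 1=\int_0^\infty\Phi(a)e^{a\,\partial_t\psi(t,x)}\,\mathrm{d}a\int_{\mathbb{R}}\omega(z)e^{z\,\partial_x\psi(t,x)}\,\mathrm{d}z, \] i.e. for every $\Psi\in C^2(\mathbb{R}_+\times\mathbb{R})$ such that $\psi_0-\Psi$ has a local maximum at $(t_0,x_0)$, one has $1\ge\int_0^\infty\int_{\mathbb{R}}\Phi(a)\omega(z)\exp[a\partial_t\Psi(t_0,x_0)+z\partial_x\Psi(t_0,x_0)]\,\mathrm{d}z\,\mathrm{d}a$.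
   Context: Fix $\mu\in(0,1)$, $\sigma>0$, $T>0$. Let $\beta(a)=\mu/(1+a)$ for $a\ge0$, $\Phi(a)=\beta(a)\exp(-\int_0^a\beta(s)\,\mathrm{d}s)=\mu(1+a)^{-1-\mu}$, and $\omega(z)=\frac{1}{\sigma\sqrt{2\pi}}e^{-z^2/(2\sigma^2)}$. For each $\varepsilon>0$ the initial datum is a function $\phi^0_\varepsilon(x,a)$, $x\in\mathbb{R}$, $a\in[0,1)$, of the form $\phi_\varepsilon^0(x,a)=v(x)+\varepsilon\eta(x,a)$, where: (H1) $v$ is bounded; (H2) $a\mapsto\exp(-\inf_x\eta(x,a))$ belongs to $L^1$; (H3) there is $C>0$ such that for all $\varepsilon>0$ and $x\in\mathbb{R}$, $\int_0^1\int_{\mathbb{R}}\Phi(a)\omega(z)e^{\int_0^a\beta}e^{-\eta(x-\varepsilon z,a)}\,\mathrm{d}z\,\mathrm{d}a>e^{-C/\varepsilon}$; (H4) $\phi^0_\varepsilon$ is Lipschitz in $x$ uniformly in $\varepsilon\in(0,1)$; (H5) there is $\mathfrak{C}_{xx}\in\mathbb{R}$ with $\partial_x^2\phi_\varepsilon^0\le\mathfrak{C}_{xx}$ in the sense of distributions. Let $n_\varepsilon(t,x,a)\ge0$ solve $\partial_t n_\varepsilon+\frac1\varepsilon\partial_a n_\varepsilon+\frac1\varepsilon\beta(a)n_\varepsilon=0$ for $t\ge0,a>0,x\in\mathbb{R}$, with $n_\varepsilon(t,x,0)=\int_0^\infty\int_{\mathbb{R}}\beta(a)\omega(z)n_\varepsilon(t,x-\varepsilon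 z,a)\,\mathrm{d}z\,\mathrm{d}a$ and $n_\varepsilon(0,x,a)=\exp(-\phi^0_\varepsilon(x,a)/\varepsilon)$ for $a\in[0,1)$, $n_\varepsilon(0,x,a)=0$ for $a\ge1$. Set $\phi_\varepsilon=-\varepsilon\ln n_\varepsilon$ and $\psi_\varepsilon(t,x)=\phi_\varepsilon(t,x,0)$. Equivalently, $\psi_\varepsilon$ satisfies for $t>0$: $1=\int_0^{t/\varepsilon}\!\int_{\mathbb{R}}\Phi(a)\omega(z)e^{[\psi_\varepsilon(t,x)-\psi_\varepsilon(t-\varepsilon a,x-\varepsilon z)]/\varepsilon}\,\mathrm{d}z\,\mathrm{d}a+\int_0^1\!\int_{\mathbb{R}}\Phi(a+t/\varepsilon)\omega(z)e^{[\psi_\varepsilon(t,x)-\phi^0_\varepsilon(x-\varepsilon z,a)]/\varepsilon+\int_0^a\beta}\,\mathrm{d}z\,\mathrm{d}a$. *)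

theory Defs
  imports "HOL-Analysis.Analysis"
begin

definition beta :: "real \<Rightarrow> real \<Rightarrow> real" where
  "beta mu a = mu / (1 + a)"

definition Bint :: "real \<Rightarrow> real \<Rightarrow> real" where
  "Bint mu a = integral {0..a} (beta mu)"

text \<open>Phi(a) = beta(a) exp(-int_0^a beta) = mu (1+a)^(-1-mu).\<close>
definition Phi :: "real \<Rightarrow> real \<Rightarrow> real" where
  "Phi mu a = beta mu a * exp (- Bint mu a)"

definition omega :: "real \<Rightarrow> real \<Rightarrow> real" where
  "omega sg z = exp (- (z ^ 2) / (2 * sg ^ 2)) / (sg * sqrt (2 * pi))"

definition test_fun :: "(real \<Rightarrow> real) \<Rightarrow> bool" where
  "test_fun g \<longleftrightarrow> (\<forall>n x. ((deriv ^^ n) g) differentiable (at x))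
                 \<and> (\<exists>R. \<forall>x. R < \<bar>x\<bar> \<longrightarrow> g x = 0)"

text \<open>f'' \<le> C in the sense of distributions on the real line.\<close>
definition dist_d2_le :: "(real \<Rightarrow> real) \<Rightarrow> real \<Rightarrow> bool" where
  "dist_d2_le f C \<longleftrightarrow>
     (\<forall>g. test_fun g \<and> (\<forall>x. 0 \<le> g x) \<longrightarrow>
        (\<integral>x. f x * (deriv ^^ 2) g x \<partial>lborel) \<le> C * (\<integral>x. g x \<partial>lborel))"

definition C1_on :: "(real \<times> real) set \<Rightarrow> (real \<times> real \<Rightarrow> real) \<Rightarrow> bool" where
  "C1_on S f \<longleftrightarrow> (\<exists>Dt Dx. continuous_on S Dt \<and> continuous_on S Dx \<and>
      (\<forall>p\<in>S. (f has_derivative (\<lambda>h. Dt p * fst h + Dx p * snd h)) (at p)))"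

definition C2_on :: "(real \<times> real) set \<Rightarrow> (real \<times> real \<Rightarrow> real) \<Rightarrow> bool" where
  "C2_on S f \<longleftrightarrow> (\<exists>Dt Dx. C1_on S Dt \<and> C1_on S Dx \<and>
      (\<forall>p\<in>S. (f has_derivative (\<lambda>h. Dt p * fst h + Dx p * snd h)) (at p)))"

end

theory Submission
  imports Defs
begin

text \<open>
  Once \<open>psi\<^sub>\<epsilon>\<close> is uniformly close to
  \<open>psi0\<close> on a small ball, an approximate maximiser \<open>p\<^sub>\<epsilon>\<close> of \<open>psi\<^sub>\<epsilon> - Psi - |p - (t0, x0)|\<^sup>2\<close>
  lies close to \<open>(t0, x0)\<close>, and there the mean value theorem for \<open>Psi\<close> bounds the difference
  quotients \<open>(psi\<^sub>\<epsilon>(t, x) - psi\<^sub>\<epsilon>(t - \<epsilon>a, x - \<epsilon>z)) / \<epsilon>\<close> from below by \<open>a pt + z px - \<delta>\<close>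
  for bounded \<open>(a, z)\<close>. Inserting this into the renewal equation at \<open>p\<^sub>\<epsilon>\<close> and dropping the
  nonnegative initial-data term bounds the integral truncated to \<open>0 \<le> a \<le> K\<close>, \<open>|z| \<le> K\<close> by
  \<open>e\<^sup>\<delta>\<close>; monotone convergence as \<open>K \<rightarrow> \<infinity>\<close>, \<open>\<delta> \<rightarrow> 0\<close> gives the claim.
\<close>

lemma increment_ge_by_mean_value:
  fixes f :: "'a::real_normed_vector \<Rightarrow> real" and D :: "'a \<Rightarrow> 'a \<Rightarrow> real"
  assumes "0 < eps"
    and deriv: "\<And>s. 0 \<le> s \<Longrightarrow> s \<le> eps \<Longrightarrow> (f has_derivative D (p - s *\<^sub>R v)) (at (p - s *\<^sub>R v))"
    and slope: "\<And>s. 0 \<le> s \<Longrightarrow> s \<le> eps \<Longrightarrow> m \<le> D (p - s *\<^sub>R v) v"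
  shows "eps * m \<le> f p - f (p - eps *\<^sub>R v)"
proof -
  define h where "h = (\<lambda>s. f (p - s *\<^sub>R v))"
  have h_deriv: "DERIV h s :> - D (p - s *\<^sub>R v) v" if "0 \<le> s" "s \<le> eps" for s
  proof -
    have line: "((\<lambda>s. p - s *\<^sub>R v) has_derivative (\<lambda>h. - (h *\<^sub>R v))) (at s)"
      by (auto intro!: derivative_eq_intros)
    have "linear (D (p - s *\<^sub>R v))"
      using deriv[OF that] by (rule has_derivative_linear)
    then have "(\<lambda>h. D (p - s *\<^sub>R v) (- (h *\<^sub>R v))) = (*) (- D (p - s *\<^sub>R v) v)"
      by (simp add: fun_eq_iff linear_neg linear_scale)
    then show ?thesis
      using has_derivative_compose[OF line deriv[OF that]]
      by (simp add: h_def has_field_derivative_def comp_def)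
  qed
  obtain s where "0 < s" "s < eps" "h eps - h 0 = (eps - 0) * - D (p - s *\<^sub>R v) v"
    using MVT2[OF \<open>0 < eps\<close>, of h "\<lambda>s. - D (p - s *\<^sub>R v) v"] h_deriv by auto
  then have "f p - f (p - eps *\<^sub>R v) = eps * D (p - s *\<^sub>R v) v"
    by (simp add: h_def)
  with slope[of s] \<open>0 < eps\<close> \<open>0 < s\<close> \<open>s < eps\<close> show ?thesis
    by (simp add: mult_left_mono)
qed

lemma increment_ge_of_gradient_near:
  fixes f Dt Dx :: "real \<times> real \<Rightarrow> real"
  assumes "0 < eps"
    and line: "\<And>s. 0 \<le> s \<Longrightarrow> s \<le> eps \<Longrightarrow> p - s *\<^sub>R (a, z) \<in> S"
    and deriv: "\<And>q. q \<in> S \<Longrightarrow> (f has_derivative (\<lambda>h. Dt q * fst h + Dx q * snd h)) (at q)"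
    and near: "\<And>q. q \<in> S \<Longrightarrow> \<bar>Dt q - pt\<bar> \<le> c \<and> \<bar>Dx q - px\<bar> \<le> c"
  shows "eps * (a * pt + z * px - c * (\<bar>a\<bar> + \<bar>z\<bar>)) \<le> f p - f (p - eps *\<^sub>R (a, z))"
proof (rule increment_ge_by_mean_value[OF \<open>0 < eps\<close>])
  fix s assume "0 \<le> s" "s \<le> eps"
  then have q: "p - s *\<^sub>R (a, z) \<in> S"
    by (rule line)
  then show "(f has_derivative (\<lambda>h. Dt (p - s *\<^sub>R (a, z)) * fst h + Dx (p - s *\<^sub>R (a, z)) * snd h))
      (at (p - s *\<^sub>R (a, z)))"
    by (rule deriv)
  have "\<bar>a * (Dt (p - s *\<^sub>R (a, z)) - pt)\<bar> \<le> \<bar>a\<bar> * c" "\<bar>z * (Dx (p - s *\<^sub>R (a, z)) - px)\<bar> \<le> \<bar>z\<bar> * c"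
    using near[OF q] by (auto simp: abs_mult intro!: mult_left_mono)
  then show "a * pt + z * px - c * (\<bar>a\<bar> + \<bar>z\<bar>)
      \<le> Dt (p - s *\<^sub>R (a, z)) * fst (a, z) + Dx (p - s *\<^sub>R (a, z)) * snd (a, z)"
    by (simp only: abs_le_iff fst_conv snd_conv) (simp add: algebra_simps)
qed

lemma approximate_maximizer_of_perturbation:
  fixes u v g q :: "'a \<Rightarrow> real"
  assumes "p0 \<in> B" "0 < gamma"
    and close: "\<And>p. p \<in> B \<Longrightarrow> \<bar>u p - v p\<bar> < e"
    and max: "\<And>p. p \<in> B \<Longrightarrow> v p - g p \<le> v p0 - g p0"
    and q: "\<And>p. 0 \<le> q p" "q p0 = 0"
  obtains pn where "pn \<in> B"
    and "\<And>p. p \<in> B \<Longrightarrow> u p - g p - q p < u pn - g pn - q pn + gamma"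
    and "q pn < 2 * e + gamma"
proof -
  define F where "F p = u p - g p - q p" for p
  have "F p \<le> v p0 - g p0 + e" if "p \<in> B" for p
    using close[OF that] max[OF that] q(1)[of p] by (simp add: F_def abs_less_iff)
  then have bdd: "bdd_above (F ` B)"
    by (meson bdd_aboveI2)
  have "(SUP p\<in>B. F p) - gamma < (SUP p\<in>B. F p)"
    using \<open>0 < gamma\<close> by simp
  then obtain pn where pn: "pn \<in> B" "(SUP p\<in>B. F p) - gamma < F pn"
    using less_cSUP_iff[OF _ bdd] \<open>p0 \<in> B\<close> by blast
  have F_pn: "F p < F pn + gamma" if "p \<in> B" for p
    using cSUP_upper[OF that bdd] pn(2) by simp
  have "q pn < 2 * e + gamma"
    using F_pn[OF \<open>p0 \<in> B\<close>] close[OF \<open>p0 \<in> B\<close>] close[OF pn(1)] max[OF pn(1)] q(2)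
    by (simp add: F_def abs_less_iff)
  with pn(1) F_pn that show ?thesis
    by (simp add: F_def)
qed

lemma norm_sq_decrement_ge:
  fixes w v :: "'a::real_inner"
  assumes "0 \<le> e"
  shows "- e * (2 * norm w * norm v + e * (norm v)\<^sup>2) \<le> (norm w)\<^sup>2 - (norm (w - e *\<^sub>R v))\<^sup>2"
proof -
  have "(norm (w - e *\<^sub>R v))\<^sup>2 = (norm w)\<^sup>2 - 2 * e * inner w v + e\<^sup>2 * (norm v)\<^sup>2"
    unfolding power2_norm_eq_inner
    by (simp add: inner_diff_left inner_diff_right inner_commute power2_eq_square)
  moreover have "- inner w v \<le> norm w * norm v"
    using Cauchy_Schwarz_ineq2[of w v] by linarith
  then have "e * - inner w v \<le> e * (norm w * norm v)"
    using assms by (rule mult_left_mono)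
  ultimately show ?thesis
    by (simp add: power2_eq_square algebra_simps)
qed

lemma uniformly_close_at_small_parameter:
  fixes f :: "real \<Rightarrow> 'a \<Rightarrow> real" and epsn :: "nat \<Rightarrow> real"
  assumes "\<And>n. 0 < epsn n" "epsn \<longlonglongrightarrow> 0"
    and "uniform_limit B (\<lambda>n. f (epsn n)) g sequentially" "0 < e" "0 < E"
  obtains eps where "0 < eps" "eps < E" "\<And>p. p \<in> B \<Longrightarrow> \<bar>f eps p - g p\<bar> < e"
proof -
  have "\<forall>\<^sub>F n in sequentially. (\<forall>p\<in>B. dist (f (epsn n) p) (g p) < e) \<and> epsn n < E"
    using assms(3,4) order_tendstoD(2)[OF assms(2,5)] unfolding uniform_limit_iff
    by (auto intro: eventually_conj)
  then obtain n where "\<forall>p\<in>B. dist (f (epsn n) p) (g p) < e" "epsn n < E"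
    using eventually_happens'[OF trivial_limit_sequentially] by blast
  with assms(1)[of n] that show ?thesis
    by (simp add: dist_real_def)
qed

text \<open>The factor \<open>exp (- 1 / (k + 1))\<close> lets a single increasing sequence send \<open>K \<rightarrow> \<infinity>\<close> and
  \<open>del \<rightarrow> 0\<close> at once, so monotone convergence applies.\<close>

lemma iterated_nn_integral_le_of_truncations:
  fixes g :: "real \<Rightarrow> real \<Rightarrow> real"
  assumes g_meas: "case_prod g \<in> borel_measurable (lborel \<Otimes>\<^sub>M lborel)"
    and g_nonneg: "\<And>a z. 0 \<le> a \<Longrightarrow> 0 \<le> g a z"
    and trunc: "\<And>K del. 1 \<le> K \<Longrightarrow> 0 < del \<Longrightarrow>
      (\<integral>\<^sup>+ a. (\<integral>\<^sup>+ z. ennreal (g a z * exp (- del)) * indicator {-K..K} z * indicator {0..K} a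
        \<partial>lborel) \<partial>lborel) \<le> C"
  shows "(\<integral>\<^sup>+ a\<in>{0..}. (\<integral>\<^sup>+ z. ennreal (g a z) \<partial>lborel) \<partial>lborel) \<le> C"
proof -
  define f where "f k a z = ennreal (g a z * exp (- inverse (real (Suc k))))
      * indicator {- real (Suc k)..real (Suc k)} z * indicator {0..real (Suc k)} a" for k a z
  have [measurable]: "(\<lambda>(a, z). f k a z) \<in> borel_measurable (lborel \<Otimes>\<^sub>M lborel)" for k
    using g_meas unfolding f_def by measurable
  have f_mono: "f k a z \<le> f l a z" if "k \<le> l" for k l a z
  proof (cases "a \<in> {0..real (Suc k)} \<and> z \<in> {- real (Suc k)..real (Suc k)}")
    case True
    then have "a \<in> {0..real (Suc l)}" "z \<in> {- real (Suc l)..real (Suc l)}"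
      using \<open>k \<le> l\<close> by auto
    moreover have "exp (- inverse (real (Suc k))) \<le> exp (- inverse (real (Suc l)))"
      using \<open>k \<le> l\<close> by (simp add: field_simps)
    then have "g a z * exp (- inverse (real (Suc k))) \<le> g a z * exp (- inverse (real (Suc l)))"
      using g_nonneg[of a z] True by (intro mult_left_mono) auto
    ultimately show ?thesis
      using True by (simp add: f_def ennreal_leI)
  qed (auto simp: f_def)
  have f_lim: "(\<lambda>k. f k a z) \<longlonglongrightarrow> ennreal (g a z) * indicator {0..} a" for a z
  proof (cases "0 \<le> a")
    case True
    have "\<forall>\<^sub>F k in sequentially. ennreal (g a z * exp (- inverse (real (Suc k)))) = f k a z"
      using eventually_ge_at_top[of "nat \<lceil>max a \<bar>z\<bar>\<rceil>"]
      by eventually_elim (use True in \<open>auto simp: f_def indicator_def abs_le_iff\<close>)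
    moreover have "(\<lambda>k. g a z * exp (- inverse (real (Suc k)))) \<longlonglongrightarrow> g a z * exp (- 0)"
      by (intro tendsto_intros LIMSEQ_inverse_real_of_nat)
    then have "(\<lambda>k. ennreal (g a z * exp (- inverse (real (Suc k))))) \<longlonglongrightarrow> ennreal (g a z)"
      by (intro tendsto_ennrealI) simp
    ultimately show ?thesis
      using True by (simp add: Lim_transform_eventually)
  qed (simp add: f_def)
  have f_incseq: "incseq (\<lambda>k. f k a z)" for a z
    by (auto simp: incseq_def intro: f_mono)
  have f_SUP: "(SUP k. f k a z) = ennreal (g a z) * indicator {0..} a" for a z
    using LIMSEQ_unique[OF LIMSEQ_SUP[OF f_incseq] f_lim] .
  have inner: "(\<integral>\<^sup>+ z. ennreal (g a z) \<partial>lborel) * indicator {0..} a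
      = (SUP k. \<integral>\<^sup>+ z. f k a z \<partial>lborel)" for a
  proof -
    have "(\<integral>\<^sup>+ z. ennreal (g a z) \<partial>lborel) * indicator {0..} a
        = (\<integral>\<^sup>+ z. (SUP k. f k a z) \<partial>lborel)"
      by (cases "0 \<le> a") (auto simp: f_SUP)
    also have "\<dots> = (SUP k. \<integral>\<^sup>+ z. f k a z \<partial>lborel)"
      by (rule nn_integral_monotone_convergence_SUP) (auto simp: incseq_def le_fun_def intro: f_mono)
    finally show ?thesis .
  qed
  have "(\<integral>\<^sup>+ a\<in>{0..}. (\<integral>\<^sup>+ z. ennreal (g a z) \<partial>lborel) \<partial>lborel)
      = (\<integral>\<^sup>+ a. (SUP k. \<integral>\<^sup>+ z. f k a z \<partial>lborel) \<partial>lborel)"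
    by (simp add: inner)
  also have "\<dots> = (SUP k. \<integral>\<^sup>+ a. (\<integral>\<^sup>+ z. f k a z \<partial>lborel) \<partial>lborel)"
    by (rule nn_integral_monotone_convergence_SUP)
      (auto simp: incseq_def le_fun_def intro!: nn_integral_mono f_mono)
  also have "\<dots> \<le> C"
    unfolding f_def by (intro SUP_least trunc) auto
  finally show ?thesis .
qed

lemma Bint_mono:
  assumes "0 < mu"
  shows "mono (Bint mu)"
proof (rule monoI)
  fix a b :: real
  assume "a \<le> b"
  have integrable: "beta mu integrable_on {0..c}" for c
    unfolding beta_def by (intro integrable_continuous_interval continuous_intros) auto
  have nonneg: "\<forall>x\<in>{0..c}. 0 \<le> beta mu x" for c
    using assms by (simp add: beta_def)
  show "Bint mu a \<le> Bint mu b"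
  proof (cases "0 \<le> a")
    case True
    then have "{0..a} \<subseteq> {0..b}"
      using \<open>a \<le> b\<close> by simp
    then show ?thesis
      unfolding Bint_def using integrable integrable nonneg by (rule integral_subset_le)
  next
    case False
    then have "Bint mu a = 0"
      by (simp add: Bint_def)
    also have "0 \<le> Bint mu b"
      unfolding Bint_def using nonneg by (intro integral_nonneg[OF integrable]) blast
    finally show ?thesis .
  qed
qed

lemma Phi_borel_measurable:
  assumes "0 < mu"
  shows "Phi mu \<in> borel_measurable borel"
proof -
  have [measurable]: "Bint mu \<in> borel_measurable borel"
    using Bint_mono[OF assms] by (rule borel_measurable_mono)
  show ?thesis
    unfolding Phi_def[abs_def] beta_def by measurable
qed

lemma Phi_nonneg: "0 < mu \<Longrightarrow> 0 \<le> a \<Longrightarrow> 0 \<le> Phi mu a"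
  unfolding Phi_def beta_def by simp

lemma omega_pos: "0 < sg \<Longrightarrow> 0 < omega sg z"
  unfolding omega_def by simp

lemma C2_on_gradient:
  fixes f :: "real \<times> real \<Rightarrow> real"
  assumes "C2_on S f" "p \<in> S" "(f has_derivative (\<lambda>h. pt * fst h + px * snd h)) (at p)"
  obtains Dt Dx
  where "\<And>q. q \<in> S \<Longrightarrow> (f has_derivative (\<lambda>h. Dt q * fst h + Dx q * snd h)) (at q)"
    and "isCont Dt p" "isCont Dx p" "Dt p = pt" "Dx p = px"
proof -
  obtain Dt Dx where C1: "C1_on S Dt" "C1_on S Dx"
    and deriv: "\<And>q. q \<in> S \<Longrightarrow> (f has_derivative (\<lambda>h. Dt q * fst h + Dx q * snd h)) (at q)"
    using assms(1) unfolding C2_on_def by blast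
  have "isCont Dt p" "isCont Dx p"
    using C1 assms(2) unfolding C1_on_def by (metis has_derivative_continuous)+
  moreover have "(\<lambda>h. Dt p * fst h + Dx p * snd h) = (\<lambda>h. pt * fst h + px * snd h)"
    using has_derivative_unique[OF deriv[OF assms(2)] assms(3)] .
  then have "Dt p = pt" "Dx p = px"
    using fun_cong[of _ _ "(1, 0)"] fun_cong[of _ _ "(0, 1)"] by fastforce+
  ultimately show ?thesis
    using that deriv by blast
qed

lemma local_max_and_gradient_on_cball:
  fixes psi0 :: "real \<Rightarrow> real \<Rightarrow> real" and Psi Dt Dx :: "real \<times> real \<Rightarrow> real"
  assumes t0: "0 < t0" "t0 < T"
    and locmax: "\<exists>r>0. \<forall>t x. (t, x) \<in> ball (t0, x0) r \<and> 0 \<le> t \<and> t \<le> T \<longrightarrow>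
        psi0 t x - Psi (t, x) \<le> psi0 t0 x0 - Psi (t0, x0)"
    and deriv: "\<And>p. p \<in> {0<..} \<times> UNIV \<Longrightarrow>
        (Psi has_derivative (\<lambda>h. Dt p * fst h + Dx p * snd h)) (at p)"
    and cont: "isCont Dt (t0, x0)" "isCont Dx (t0, x0)"
    and "0 < c"
  obtains rho where "0 < rho"
    and "\<And>p. p \<in> cball (t0, x0) rho \<Longrightarrow> t0 / 2 \<le> fst p \<and> fst p \<le> T"
    and "\<And>p. p \<in> cball (t0, x0) rho \<Longrightarrow> psi0 (fst p) (snd p) - Psi p \<le> psi0 t0 x0 - Psi (t0, x0)"
    and "\<And>p. p \<in> cball (t0, x0) rho \<Longrightarrow> (Psi has_derivative (\<lambda>h. Dt p * fst h + Dx p * snd h)) (at p)"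
    and "\<And>p. p \<in> cball (t0, x0) rho \<Longrightarrow>
      \<bar>Dt p - Dt (t0, x0)\<bar> \<le> c \<and> \<bar>Dx p - Dx (t0, x0)\<bar> \<le> c"
proof -
  obtain r where "0 < r" and r: "\<And>t x. (t, x) \<in> ball (t0, x0) r \<Longrightarrow> 0 \<le> t \<Longrightarrow> t \<le> T \<Longrightarrow>
      psi0 t x - Psi (t, x) \<le> psi0 t0 x0 - Psi (t0, x0)"
    using locmax by blast
  obtain rt where "0 < rt" and rt: "\<And>p. dist p (t0, x0) < rt \<Longrightarrow> \<bar>Dt p - Dt (t0, x0)\<bar> < c"
    using cont(1) \<open>0 < c\<close> unfolding continuous_at_eps_delta dist_real_def by blast
  obtain rx where "0 < rx" and rx: "\<And>p. dist p (t0, x0) < rx \<Longrightarrow> \<bar>Dx p - Dx (t0, x0)\<bar> < c"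
    using cont(2) \<open>0 < c\<close> unfolding continuous_at_eps_delta dist_real_def by blast
  define rho where "rho = min (min (r/2) (min (t0/2) (T - t0))) (min (rt/2) (rx/2))"
  have rho: "0 < rho" "rho < r" "rho \<le> t0/2" "rho \<le> T - t0" "rho < rt" "rho < rx"
    using \<open>0 < r\<close> \<open>0 < rt\<close> \<open>0 < rx\<close> t0 by (auto simp: rho_def min_def)
  have fst_bounds: "t0 / 2 \<le> fst p \<and> fst p \<le> T" if "p \<in> cball (t0, x0) rho" for p
    using that dist_fst_le[of p "(t0, x0)"] rho by (auto simp: dist_real_def dist_commute)
  show ?thesis
  proof (rule that[OF \<open>0 < rho\<close> fst_bounds])
    fix p assume p: "p \<in> cball (t0, x0) rho"
    show "psi0 (fst p) (snd p) - Psi p \<le> psi0 t0 x0 - Psi (t0, x0)"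
      using r[of "fst p" "snd p"] fst_bounds[OF p] p rho t0 by (auto simp: dist_commute)
    show "(Psi has_derivative (\<lambda>h. Dt p * fst h + Dx p * snd h)) (at p)"
      using deriv[of p] fst_bounds[OF p] t0 by (cases p) auto
    show "\<bar>Dt p - Dt (t0, x0)\<bar> \<le> c \<and> \<bar>Dx p - Dx (t0, x0)\<bar> \<le> c"
      using rt[of p] rx[of p] p rho by (auto simp: dist_commute)
  qed
qed

text \<open>The smallness conditions bound the three error terms at \<open>pn\<close>: the deviation of the gradient
  of \<open>Psi\<close> from \<open>(pt, px)\<close> costs \<open>eps * del / 4\<close>, the change of the penalty \<open>(dist p p0)\<^sup>2\<close>
  costs \<open>eps * del / 2\<close>, and the maximality gap is \<open>eps * del / 4\<close>.\<close>

lemma difference_quotient_ge_at_penalized_maximizer: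
  fixes u v Psi Dt Dx :: "real \<times> real \<Rightarrow> real" and p0 :: "real \<times> real" and rho :: real
  defines "B \<equiv> cball p0 rho"
  assumes pos: "0 < eps" "0 < dT" "0 < K"
    and small: "dT \<le> rho / 4" "eps * K \<le> rho / 4" "K * dT \<le> del / 16" "eps * K\<^sup>2 \<le> del / 16"
      "eps * del \<le> dT\<^sup>2"
    and close: "\<And>p. p \<in> B \<Longrightarrow> \<bar>u p - v p\<bar> < dT\<^sup>2 / 4"
    and max: "\<And>p. p \<in> B \<Longrightarrow> v p - Psi p \<le> v p0 - Psi p0"
    and deriv: "\<And>p. p \<in> B \<Longrightarrow> (Psi has_derivative (\<lambda>h. Dt p * fst h + Dx p * snd h)) (at p)"
    and near: "\<And>p. p \<in> B \<Longrightarrow> \<bar>Dt p - pt\<bar> \<le> del / (8 * K) \<and> \<bar>Dx p - px\<bar> \<le> del / (8 * K)"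
  obtains pn where "pn \<in> B"
    and "\<And>a z. \<bar>a\<bar> \<le> K \<Longrightarrow> \<bar>z\<bar> \<le> K \<Longrightarrow> pn - eps *\<^sub>R (a, z) \<in> B
           \<and> eps * (a * pt + z * px - del) \<le> u pn - u (pn - eps *\<^sub>R (a, z))"
proof -
  have "p0 \<in> B"
    using pos small by (simp add: B_def)
  have "0 < del"
    using mult_pos_pos[OF pos(3,2)] small(3) by linarith
  obtain pn where "pn \<in> B"
    and pn_max: "\<And>p. p \<in> B \<Longrightarrow> u p - Psi p - (dist p p0)\<^sup>2
        < u pn - Psi pn - (dist pn p0)\<^sup>2 + eps * del / 4"
    and pn_near: "(dist pn p0)\<^sup>2 < 2 * (dT\<^sup>2 / 4) + eps * del / 4"
    by (rule approximate_maximizer_of_perturbation[where u = u and v = v and g = Psi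
          and q = "\<lambda>p. (dist p p0)\<^sup>2" and e = "dT\<^sup>2 / 4" and gamma = "eps * del / 4"])
      (use \<open>p0 \<in> B\<close> \<open>0 < del\<close> pos close max in auto)
  have "(dist pn p0)\<^sup>2 < dT\<^sup>2"
    using pn_near small(5) zero_less_power[OF pos(2), of 2] by linarith
  then have "dist pn p0 < dT"
    using pos(2) by (simp add: power_less_imp_less_base)
  have "pn - eps *\<^sub>R (a, z) \<in> B \<and> eps * (a * pt + z * px - del) \<le> u pn - u (pn - eps *\<^sub>R (a, z))"
    if az: "\<bar>a\<bar> \<le> K" "\<bar>z\<bar> \<le> K" for a z
  proof -
    define w where "w = (a, z)"
    have "norm w \<le> 2 * K"
      using norm_Pair_le[of a z] az by (simp add: w_def)
    have line_in_B: "pn - s *\<^sub>R w \<in> B" if "0 \<le> s" "s \<le> eps" for s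
    proof -
      have "dist (pn - s *\<^sub>R w) p0 \<le> dist pn p0 + s * norm w"
        using norm_triangle_ineq4[of "pn - p0" "s *\<^sub>R w"] that by (simp add: dist_norm algebra_simps)
      also have "\<dots> \<le> dT + eps * (2 * K)"
        using that \<open>dist pn p0 < dT\<close> \<open>norm w \<le> 2 * K\<close> pos by (intro add_mono mult_mono) auto
      also have "\<dots> \<le> rho"
        using small(1,2) pos by (simp add: mult.left_commute[of eps])
      finally show ?thesis
        by (simp add: B_def dist_commute)
    qed
    define s where "s = pn - eps *\<^sub>R w"
    have "s \<in> B"
      using line_in_B[of eps] pos by (simp add: s_def)
    have incr: "eps * (a * pt + z * px - del / (8 * K) * (\<bar>a\<bar> + \<bar>z\<bar>)) \<le> Psi pn - Psi s"
      unfolding s_def w_def using pos(1) line_in_B[unfolded w_def] deriv near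
      by (rule increment_ge_of_gradient_near)
    have "del / (8 * K) * (\<bar>a\<bar> + \<bar>z\<bar>) \<le> del / (8 * K) * (2 * K)"
      using az pos \<open>0 < del\<close> by (intro mult_left_mono) auto
    also have "\<dots> = del / 4"
      using pos by simp
    finally have "eps * (a * pt + z * px - del / 4)
        \<le> eps * (a * pt + z * px - del / (8 * K) * (\<bar>a\<bar> + \<bar>z\<bar>))"
      using pos(1) by (intro mult_left_mono) auto
    with incr have Psi_incr: "eps * (a * pt + z * px - del / 4) \<le> Psi pn - Psi s"
      by linarith
    have "2 * norm (pn - p0) * norm w + eps * (norm w)\<^sup>2 \<le> del / 2"
    proof -
      have "norm (pn - p0) * norm w \<le> dT * (2 * K)"
        using \<open>dist pn p0 < dT\<close> \<open>norm w \<le> 2 * K\<close> pos by (intro mult_mono) (auto simp: dist_norm)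
      moreover have "(norm w)\<^sup>2 \<le> (2 * K)\<^sup>2"
        using \<open>norm w \<le> 2 * K\<close> by (intro power_mono) auto
      then have "eps * (norm w)\<^sup>2 \<le> eps * (2 * K)\<^sup>2"
        using pos by (intro mult_left_mono) auto
      ultimately show ?thesis
        using small(3,4) by (simp add: power2_eq_square algebra_simps)
    qed
    then have "- eps * (del / 2) \<le> - eps * (2 * norm (pn - p0) * norm w + eps * (norm w)\<^sup>2)"
      using pos by simp
    also have "\<dots> \<le> (dist pn p0)\<^sup>2 - (dist s p0)\<^sup>2"
      using norm_sq_decrement_ge[of eps "pn - p0" w] pos
      by (simp add: s_def dist_norm algebra_simps)
    finally have "- eps * (del / 2) \<le> (dist pn p0)\<^sup>2 - (dist s p0)\<^sup>2" .
    with pn_max[OF \<open>s \<in> B\<close>] Psi_incr \<open>s \<in> B\<close> show ?thesis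
      by (simp add: s_def w_def algebra_simps)
  qed
  with \<open>pn \<in> B\<close> that show ?thesis
    by blast
qed

lemma difference_quotient_lower_bound:
  fixes psi :: "real \<Rightarrow> real \<Rightarrow> real \<Rightarrow> real"
    and psi0 :: "real \<Rightarrow> real \<Rightarrow> real"
    and Psi Dt Dx :: "real \<times> real \<Rightarrow> real"
    and epsn :: "nat \<Rightarrow> real"
  assumes epsn_pos: "\<And>n. 0 < epsn n"
    and epsn_lim: "epsn \<longlonglongrightarrow> 0"
    and conv: "\<And>K. compact K \<Longrightarrow> K \<subseteq> {0..T} \<times> UNIV \<Longrightarrow>
        uniform_limit K (\<lambda>n p. psi (epsn n) (fst p) (snd p)) (\<lambda>p. psi0 (fst p) (snd p)) sequentially"
    and t0: "0 < t0" "t0 < T"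
    and locmax: "\<exists>r>0. \<forall>t x. (t, x) \<in> ball (t0, x0) r \<and> 0 \<le> t \<and> t \<le> T \<longrightarrow>
        psi0 t x - Psi (t, x) \<le> psi0 t0 x0 - Psi (t0, x0)"
    and deriv: "\<And>p. p \<in> {0<..} \<times> UNIV \<Longrightarrow>
        (Psi has_derivative (\<lambda>h. Dt p * fst h + Dx p * snd h)) (at p)"
    and cont: "isCont Dt (t0, x0)" "isCont Dx (t0, x0)"
    and grad: "Dt (t0, x0) = pt" "Dx (t0, x0) = px"
    and K: "1 \<le> K" and del: "0 < del"
  shows "\<exists>eps>0. \<exists>t>0. \<exists>x. \<forall>a z. 0 \<le> a \<and> a \<le> K \<and> \<bar>z\<bar> \<le> K \<longrightarrow>
           a \<le> t / eps \<and> a * pt + z * px - del \<le> (psi eps t x - psi eps (t - eps * a) (x - eps * z)) / eps"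
proof -
  have "0 < del / (8 * K)"
    using del K by simp
  then obtain rho where "0 < rho"
    and B_fst: "\<And>p. p \<in> cball (t0, x0) rho \<Longrightarrow> t0 / 2 \<le> fst p \<and> fst p \<le> T"
    and B_max: "\<And>p. p \<in> cball (t0, x0) rho \<Longrightarrow> psi0 (fst p) (snd p) - Psi p \<le> psi0 t0 x0 - Psi (t0, x0)"
    and B_deriv: "\<And>p. p \<in> cball (t0, x0) rho \<Longrightarrow>
      (Psi has_derivative (\<lambda>h. Dt p * fst h + Dx p * snd h)) (at p)"
    and B_near: "\<And>p. p \<in> cball (t0, x0) rho \<Longrightarrow>
      \<bar>Dt p - pt\<bar> \<le> del / (8 * K) \<and> \<bar>Dx p - px\<bar> \<le> del / (8 * K)"
    using local_max_and_gradient_on_cball[OF t0 locmax deriv cont] unfolding grad by blast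
  define dT where "dT = min (rho / 4) (del / (16 * K))"
  have dT: "0 < dT" "dT \<le> rho / 4" "K * dT \<le> del / 16"
  proof -
    have "dT \<le> del / (16 * K)"
      by (simp add: dT_def)
    then show "K * dT \<le> del / 16"
      using K by (simp add: field_simps)
  qed (use \<open>0 < rho\<close> del K in \<open>auto simp: dT_def\<close>)
  define E where "E = min (rho / (4 * K)) (min (del / (16 * K\<^sup>2)) (dT\<^sup>2 / del))"
  have "0 < E"
    using \<open>0 < rho\<close> del K dT by (simp add: E_def)
  have "cball (t0, x0) rho \<subseteq> {0..T} \<times> UNIV"
    using B_fst t0 by (force simp: mem_Times_iff)
  then obtain eps where "0 < eps" "eps < E"
    and close: "\<And>p. p \<in> cball (t0, x0) rho \<Longrightarrow>
      \<bar>psi eps (fst p) (snd p) - psi0 (fst p) (snd p)\<bar> < dT\<^sup>2 / 4"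
    by (rule uniformly_close_at_small_parameter[where f = "\<lambda>eps p. psi eps (fst p) (snd p)"
          and B = "cball (t0, x0) rho" and e = "dT\<^sup>2 / 4" and E = E, OF epsn_pos epsn_lim conv[OF compact_cball]])
      (use dT(1) \<open>0 < E\<close> in auto)
  have eps: "eps * K \<le> rho / 4" "eps * K\<^sup>2 \<le> del / 16" "eps * del \<le> dT\<^sup>2"
    using \<open>eps < E\<close> K del by (auto simp: E_def field_simps)
  obtain pn where "pn \<in> cball (t0, x0) rho"
    and pn: "\<And>a z. \<bar>a\<bar> \<le> K \<Longrightarrow> \<bar>z\<bar> \<le> K \<Longrightarrow> pn - eps *\<^sub>R (a, z) \<in> cball (t0, x0) rho
        \<and> eps * (a * pt + z * px - del)
          \<le> psi eps (fst pn) (snd pn) - psi eps (fst pn - eps * a) (snd pn - eps * z)"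
    by (rule difference_quotient_ge_at_penalized_maximizer[where u = "\<lambda>p. psi eps (fst p) (snd p)"
          and v = "\<lambda>p. psi0 (fst p) (snd p)" and Psi = Psi and Dt = Dt and Dx = Dx])
      (use \<open>0 < eps\<close> dT K eps close B_max B_deriv B_near in auto)
  have "a \<le> fst pn / eps \<and> a * pt + z * px - del
      \<le> (psi eps (fst pn) (snd pn) - psi eps (fst pn - eps * a) (snd pn - eps * z)) / eps"
    if "0 \<le> a" "a \<le> K" "\<bar>z\<bar> \<le> K" for a z
  proof -
    have "0 \<le> fst pn - eps * a"
      using B_fst[of "pn - eps *\<^sub>R (a, z)"] pn[of a z] that t0 by auto
    with pn[of a z] that \<open>0 < eps\<close> show ?thesis
      by (simp add: pos_le_divide_eq mult.commute)
  qed
  moreover have "0 < fst pn"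
    using B_fst[OF \<open>pn \<in> cball (t0, x0) rho\<close>] t0 by simp
  ultimately show ?thesis
    using \<open>0 < eps\<close> by blast
qed

lemma truncated_integral_le_one:
  fixes k :: "real \<Rightarrow> real \<Rightarrow> real" and psi :: "real \<Rightarrow> real \<Rightarrow> real \<Rightarrow> real"
    and R :: "real \<Rightarrow> real \<Rightarrow> real \<Rightarrow> ennreal"
  assumes k_nonneg: "\<And>a z. 0 \<le> a \<Longrightarrow> 0 \<le> k a z"
    and renewal: "\<And>eps t x. 0 < eps \<Longrightarrow> 0 < t \<Longrightarrow>
        1 = (\<integral>\<^sup>+ a\<in>{0..t/eps}. (\<integral>\<^sup>+ z. ennreal (k a z
                 * exp ((psi eps t x - psi eps (t - eps * a) (x - eps * z)) / eps)) \<partial>lborel) \<partial>lborel)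
          + R eps t x"
    and quotient: "\<exists>eps>0. \<exists>t>0. \<exists>x. \<forall>a z. 0 \<le> a \<and> a \<le> K \<and> \<bar>z\<bar> \<le> K \<longrightarrow>
        a \<le> t / eps \<and> a * pt + z * px - del \<le> (psi eps t x - psi eps (t - eps * a) (x - eps * z)) / eps"
  shows "(\<integral>\<^sup>+ a. (\<integral>\<^sup>+ z. ennreal (k a z * exp (a * pt + z * px) * exp (- del))
            * indicator {-K..K} z * indicator {0..K} a \<partial>lborel) \<partial>lborel) \<le> 1"
proof -
  obtain eps t x where "0 < eps" "0 < t"
    and q: "\<And>a z. 0 \<le> a \<Longrightarrow> a \<le> K \<Longrightarrow> \<bar>z\<bar> \<le> K \<Longrightarrow> a \<le> t / eps
      \<and> a * pt + z * px - del \<le> (psi eps t x - psi eps (t - eps * a) (x - eps * z)) / eps"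
    using quotient by blast
  define Q where "Q a z = (psi eps t x - psi eps (t - eps * a) (x - eps * z)) / eps" for a z
  have pointwise: "ennreal (k a z * exp (a * pt + z * px) * exp (- del)) * indicator {-K..K} z * indicator {0..K} a
      \<le> ennreal (k a z * exp (Q a z)) * indicator {0..t/eps} a" for a z
  proof (cases "a \<in> {0..K} \<and> z \<in> {-K..K}")
    case True
    then have "a \<le> t / eps" "exp (a * pt + z * px) * exp (- del) \<le> exp (Q a z)"
      using q[of a z] by (auto simp: Q_def exp_add[symmetric])
    moreover have "0 \<le> k a z"
      using True k_nonneg by simp
    ultimately show ?thesis
      using True by (auto simp: mult.assoc intro!: ennreal_leI mult_left_mono)
  qed auto
  have "(\<integral>\<^sup>+ a. (\<integral>\<^sup>+ z. ennreal (k a z * exp (a * pt + z * px) * exp (- del))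
            * indicator {-K..K} z * indicator {0..K} a \<partial>lborel) \<partial>lborel)
      \<le> (\<integral>\<^sup>+ a. (\<integral>\<^sup>+ z. ennreal (k a z * exp (Q a z)) * indicator {0..t/eps} a \<partial>lborel) \<partial>lborel)"
    by (intro nn_integral_mono pointwise)
  also have "\<dots> = (\<integral>\<^sup>+ a\<in>{0..t/eps}. (\<integral>\<^sup>+ z. ennreal (k a z * exp (Q a z)) \<partial>lborel) \<partial>lborel)"
    by (intro nn_integral_cong) (simp add: indicator_def)
  also have "\<dots> \<le> 1"
    unfolding Q_def by (subst renewal[OF \<open>0 < eps\<close> \<open>0 < t\<close>]) (rule add_increasing2, auto)
  finally show ?thesis .
qed

text \<open>Hypotheses (H1)--(H5) and the initial condition serve the existence and compactness of
  \<open>psi\<close> in the paper; the subsolution inequality only uses the renewal equation and the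
  local uniform convergence.\<close>

theorem proposition6:
  fixes mu sg T :: real
    and v :: "real \<Rightarrow> real"
    and eta :: "real \<Rightarrow> real \<Rightarrow> real"
    and psi :: "real \<Rightarrow> real \<Rightarrow> real \<Rightarrow> real"
    and epsn :: "nat \<Rightarrow> real"
    and psi0 :: "real \<Rightarrow> real \<Rightarrow> real"
    and Psi :: "real \<times> real \<Rightarrow> real"
    and t0 x0 pt px :: real
  defines "phi0 \<equiv> (\<lambda>eps x a. v x + eps * eta x a)"
  assumes mu: "0 < mu" "mu < 1"
    and sg: "0 < sg"
    and T: "0 < T"
    and H1: "bounded (range v)"
    and H2: "(\<lambda>a. indicator {0..<1} a * (SUP x. ennreal (exp (- eta x a)))) \<in> borel_measurable lborel"
            "(\<integral>\<^sup>+ a\<in>{0..<1}. (SUP x. ennreal (exp (- eta x a))) \<partial>lborel) < \<infinity>"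
    and H3: "\<exists>C>0. \<forall>eps>0. \<forall>x.
              (\<integral>\<^sup>+ a\<in>{0..<1}. (\<integral>\<^sup>+ z. ennreal (Phi mu a * omega sg z * exp (Bint mu a)
                   * exp (- eta (x - eps * z) a)) \<partial>lborel) \<partial>lborel)
              > ennreal (exp (- C / eps))"
    and H4: "\<exists>L. \<forall>eps\<in>{0<..<1}. \<forall>a\<in>{0..<1}. \<forall>x y.
              \<bar>phi0 eps x a - phi0 eps y a\<bar> \<le> L * \<bar>x - y\<bar>"
    and H5: "\<exists>Cxx. \<forall>eps>0. \<forall>a\<in>{0..<1}. dist_d2_le (\<lambda>x. phi0 eps x a) Cxx"
    and psi_init: "\<And>eps x. eps > 0 \<Longrightarrow> psi eps 0 x = phi0 eps x 0"
    and psi_eq: "\<And>eps t x. eps > 0 \<Longrightarrow> t > 0 \<Longrightarrow>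
        1 = (\<integral>\<^sup>+ a\<in>{0..t/eps}. (\<integral>\<^sup>+ z. ennreal (Phi mu a * omega sg z
                 * exp ((psi eps t x - psi eps (t - eps * a) (x - eps * z)) / eps)) \<partial>lborel) \<partial>lborel)
          + (\<integral>\<^sup>+ a\<in>{0..<1}. (\<integral>\<^sup>+ z. ennreal (Phi mu (a + t/eps) * omega sg z
                 * exp ((psi eps t x - phi0 eps (x - eps * z) a) / eps + Bint mu a)) \<partial>lborel) \<partial>lborel)"
    and epsn_pos: "\<And>n. 0 < epsn n"
    and epsn_lim: "epsn \<longlonglongrightarrow> 0"
    and conv: "\<And>K. compact K \<Longrightarrow> K \<subseteq> {0..T} \<times> UNIV \<Longrightarrow>
        uniform_limit K (\<lambda>n p. psi (epsn n) (fst p) (snd p)) (\<lambda>p. psi0 (fst p) (snd p)) sequentially"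
    and Psi_C2: "C2_on ({0<..} \<times> UNIV) Psi"
    and Psi_deriv: "(Psi has_derivative (\<lambda>h. pt * fst h + px * snd h)) (at (t0, x0))"
    and t0: "0 < t0" "t0 < T"
    and locmax: "\<exists>r>0. \<forall>t x. (t, x) \<in> ball (t0, x0) r \<and> 0 \<le> t \<and> t \<le> T \<longrightarrow>
        psi0 t x - Psi (t, x) \<le> psi0 t0 x0 - Psi (t0, x0)"
  shows "(\<integral>\<^sup>+ a\<in>{0..}. (\<integral>\<^sup>+ z. ennreal (Phi mu a * omega sg z
            * exp (a * pt + z * px)) \<partial>lborel) \<partial>lborel) \<le> 1"
proof -
  obtain Dt Dx
    where deriv: "\<And>p. p \<in> {0<..} \<times> UNIV \<Longrightarrow> (Psi has_derivative (\<lambda>h. Dt p * fst h + Dx p * snd h)) (at p)"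
      and cont: "isCont Dt (t0, x0)" "isCont Dx (t0, x0)"
      and grad: "Dt (t0, x0) = pt" "Dx (t0, x0) = px"
    by (rule C2_on_gradient[OF Psi_C2 _ Psi_deriv]) (use t0 in auto)
  have [measurable]: "Phi mu \<in> borel_measurable borel"
    using mu(1) by (rule Phi_borel_measurable)
  show ?thesis
  proof (rule iterated_nn_integral_le_of_truncations)
    show "(\<lambda>(a, z). Phi mu a * omega sg z * exp (a * pt + z * px)) \<in> borel_measurable (lborel \<Otimes>\<^sub>M lborel)"
      unfolding omega_def by measurable
    show "0 \<le> Phi mu a * omega sg z * exp (a * pt + z * px)" if "0 \<le> a" for a z
      using Phi_nonneg[OF mu(1) that] omega_pos[OF sg, of z] by simp
    fix K del :: real
    assume "1 \<le> K" "0 < del"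
    show "(\<integral>\<^sup>+ a. (\<integral>\<^sup>+ z. ennreal (Phi mu a * omega sg z * exp (a * pt + z * px) * exp (- del))
        * indicator {-K..K} z * indicator {0..K} a \<partial>lborel) \<partial>lborel) \<le> 1"
      by (rule truncated_integral_le_one[where k = "\<lambda>a z. Phi mu a * omega sg z", OF _ psi_eq
            difference_quotient_lower_bound[OF epsn_pos epsn_lim conv t0 locmax deriv cont grad
              \<open>1 \<le> K\<close> \<open>0 < del\<close>]])
        (use Phi_nonneg[OF mu(1)] omega_pos[OF sg] in \<open>auto intro: mult_nonneg_nonneg less_imp_le\<close>)
  qed
qed

end
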